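(* Let $N\ge1$, $\tilde s\in(0,1)$ and $$\tilde m\in\Big(\frac{N-2+4\tilde s}{N+2\tilde s},\ \frac{N+2\tilde s}{N+2}\Big).$$ Then there is a constant $K=K(N,\tilde s,\tilde m)>0$ such that $$v(x,t)=K\,t^{\frac{1}{1-\tilde m}}\,|x|^{-\frac{2-2\tilde s}{1-\tilde m}},\qquad x\neq 0,\ t>0,$$ is a solution of $$v_t=\nabla\cdot\big(v^{\tilde m-1}\nabla(-\Delta)^{-\tilde s}v\big).$$
   Context: For $0<\sigma<1$, $(-\Delta)^{-\sigma}$ is the inverse fractional Laplacian on $\mathbb{R}^N$ (Fourier symbol $(2\pi|\xi|)^{-2\sigma}$, Riesz potential). On power functions it acts by $$(-\Delta)^{-\sigma}|x|^{-\alpha}=\bar k(\alpha)\,|x|^{-\alpha+2\sigma},$$ where $$\bar k(\alpha)=2^{-2\sigma}\frac{\Gamma\big(\frac{N-\alpha}{2}\big)\,\Gamma\big(\frac{\alpha-2\sigma}{2}\big)}{\Gamma\big(\frac{\alpha}{2}\big)\,\Gamma\big(\frac{N-\alpha+2\sigma}{2}\big)}.$$ This formula is used as the meaning of $(-\Delta)^{-\sigma}|x|^{-\alpha}$ whenever the Gamma factors are finite, including exponents $\alpha>N$. The equation is required to hold pointwise for $x\neq0$, $t>0$. *)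

theory Defs
  imports "HOL-Analysis.Analysis"
begin

text \<open>The multiplier kbar(alpha) of the inverse fractional Laplacian on power functions
  in dimension N with order sigma.\<close>
definition kbar :: "nat \<Rightarrow> real \<Rightarrow> real \<Rightarrow> real" where
  "kbar N \<sigma> \<alpha> =
     2 powr (-2*\<sigma>) * (Gamma ((real N - \<alpha>)/2) * Gamma ((\<alpha> - 2*\<sigma>)/2))
       / (Gamma (\<alpha>/2) * Gamma ((real N - \<alpha> + 2*\<sigma>)/2))"

definition kbar_defined :: "nat \<Rightarrow> real \<Rightarrow> real \<Rightarrow> bool" where
  "kbar_defined N \<sigma> \<alpha> \<longleftrightarrow>
     (real N - \<alpha>)/2 \<notin> \<int>\<^sub>\<le>\<^sub>0 \<and> (\<alpha> - 2*\<sigma>)/2 \<notin> \<int>\<^sub>\<le>\<^sub>0 \<and>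
     \<alpha>/2 \<notin> \<int>\<^sub>\<le>\<^sub>0 \<and> (real N - \<alpha> + 2*\<sigma>)/2 \<notin> \<int>\<^sub>\<le>\<^sub>0"

text \<open>inv_frac_lap sigma u w: u is a power function c |x|^(-alpha) on x /= 0 and
  w = (-Delta)^(-sigma) u, given by the formula c kbar(alpha) |x|^(-alpha+2 sigma) (on x /= 0),
  the dimension being N = CARD('n).\<close>
definition inv_frac_lap :: "real \<Rightarrow> (real^'n \<Rightarrow> real) \<Rightarrow> (real^'n \<Rightarrow> real) \<Rightarrow> bool" where
  "inv_frac_lap \<sigma> u w \<longleftrightarrow>
     (\<exists>c \<alpha>. kbar_defined CARD('n) \<sigma> \<alpha> \<and>
        (\<forall>x. x \<noteq> 0 \<longrightarrow> u x = c * norm x powr (-\<alpha>)) \<and>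
        (\<forall>x. x \<noteq> 0 \<longrightarrow> w x = c * kbar CARD('n) \<sigma> \<alpha> * norm x powr (-\<alpha> + 2*\<sigma>)))"

definition has_partial :: "(real^'n \<Rightarrow> real) \<Rightarrow> 'n \<Rightarrow> real^'n \<Rightarrow> real \<Rightarrow> bool" where
  "has_partial f i x d \<longleftrightarrow> ((\<lambda>h. f (x + h *\<^sub>R axis i 1)) has_real_derivative d) (at 0)"

end

theory Submission
  imports Defs
begin

text \<open>Separation of variables: with \<open>a = (2 - 2s)/(1 - m)\<close> the Riesz potential of
  \<open>|x|\<^sup>-\<^sup>a\<close> is \<open>k |x|\<^sup>2\<^sup>s\<^sup>-\<^sup>a\<close>, and the choice of \<open>a\<close> makes the flux
  \<open>v\<^sup>m\<^sup>-\<^sup>1 \<nabla>(-\<Delta>)\<^sup>-\<^sup>s v\<close> a multiple of \<open>|x|\<^sup>-\<^sup>a x\<close>, whose divergence is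
  \<open>(N - a)|x|\<^sup>-\<^sup>a\<close>. Both sides of the equation are then \<open>|x|\<^sup>-\<^sup>a\<close> times a power of \<open>t\<close>,
  and matching the coefficients of \<open>t\<^sup>m\<^sup>/\<^sup>(\<^sup>1\<^sup>-\<^sup>m\<^sup>)\<close> fixes \<open>K\<close>, provided
  \<open>k (2s - a)(N - a) > 0\<close>. The bounds on \<open>m\<close> say exactly \<open>N + 2s < a < N + 2\<close>; there
  \<open>(N - a)/2\<close> and \<open>(N - a + 2s)/2\<close> lie in \<open>(-1, 0)\<close>, where Gamma is negative, so \<open>k > 0\<close>
  and \<open>(2s - a)(N - a) > 0\<close>.\<close>

lemma has_partial_cmult:
  "has_partial f i x d \<Longrightarrow> has_partial (\<lambda>y. c * f y) i x (c * d)"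
  unfolding has_partial_def by (rule DERIV_cmult)

lemma has_partial_mult:
  assumes "has_partial f i x df" "has_partial g i x dg"
  shows "has_partial (\<lambda>y. f y * g y) i x (df * g x + f x * dg)"
  using DERIV_mult[OF assms[unfolded has_partial_def]]
  unfolding has_partial_def by (simp add: ac_simps)

lemma has_partial_component: "has_partial (\<lambda>y. y $ i) i x 1"
  unfolding has_partial_def by (auto intro!: derivative_eq_intros simp: axis_def)

lemma has_partial_norm_powr:
  fixes x :: "real^'n"
  assumes "x \<noteq> 0"
  shows "has_partial (\<lambda>y. norm y powr p) i x (p * norm x powr (p - 2) * x $ i)"
proof -
  have line: "((\<lambda>h::real. x + h *\<^sub>R axis i 1) has_derivative (\<lambda>h. h *\<^sub>R axis i 1)) (at 0)"
    by (auto intro!: derivative_eq_intros)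
  have "(norm has_derivative (\<lambda>v. v \<bullet> sgn x)) (at (x + 0 *\<^sub>R axis i (1::real)))"
    using has_derivative_norm[OF assms] by simp
  from diff_chain_at[OF line this]
  have "((\<lambda>h. norm (x + h *\<^sub>R axis i 1)) has_derivative (\<lambda>h. (h *\<^sub>R axis i 1) \<bullet> sgn x)) (at 0)"
    by (simp add: o_def)
  moreover have "(\<lambda>h. (h *\<^sub>R axis i 1) \<bullet> sgn x) = (*) (x $ i / norm x)"
    by (auto simp: sgn_div_norm inner_axis' inner_commute inner_axis field_simps)
  ultimately have "((\<lambda>h. norm (x + h *\<^sub>R axis i 1)) has_real_derivative x $ i / norm x) (at 0)"
    by (simp add: has_field_derivative_def)
  from DERIV_fun_powr[OF this, of p]
  have "((\<lambda>h. norm (x + h *\<^sub>R axis i 1) powr p) has_real_derivative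
      p * norm x powr (p - 1) * (x $ i / norm x)) (at 0)"
    using assms by simp
  moreover have "p * norm x powr (p - 1) * (x $ i / norm x) = p * norm x powr (p - 2) * x $ i"
    using assms by (simp add: powr_diff field_simps powr_numeral power2_eq_square)
  ultimately show ?thesis unfolding has_partial_def by simp
qed

lemma has_partial_norm_powr_times_component:
  fixes x :: "real^'n"
  assumes "x \<noteq> 0"
  shows "has_partial (\<lambda>y. norm y powr p * y $ i) i x
           (p * norm x powr (p - 2) * (x $ i)\<^sup>2 + norm x powr p)"
  using has_partial_mult[OF has_partial_norm_powr[OF assms] has_partial_component, of p i]
  by (simp add: power2_eq_square mult.assoc)

lemma sum_partials_norm_powr_times_component:
  fixes x :: "real^'n"
  assumes "x \<noteq> 0"
  shows "(\<Sum>i\<in>UNIV. p * norm x powr (p - 2) * (x $ i)\<^sup>2 + norm x powr p)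
       = (real CARD('n) + p) * norm x powr p"
proof -
  have "(norm x)\<^sup>2 = (\<Sum>i\<in>UNIV. (x $ i)\<^sup>2)"
    unfolding power2_norm_eq_inner inner_vec_def by (simp add: power2_eq_square)
  then have "(\<Sum>i\<in>UNIV. p * norm x powr (p - 2) * (x $ i)\<^sup>2 + norm x powr p)
      = p * (norm x powr (p - 2) * (norm x)\<^sup>2) + real CARD('n) * norm x powr p"
    by (simp add: sum.distrib sum_distrib_left mult.assoc)
  also have "norm x powr (p - 2) * (norm x)\<^sup>2 = norm x powr p"
    using assms by (simp add: powr_diff powr_numeral)
  finally show ?thesis by (simp add: algebra_simps)
qed

lemma Gamma_real_neg:
  assumes "-1 < z" "z < (0::real)"
  shows "Gamma z < 0"
proof -
  have "z \<notin> \<int>\<^sub>\<le>\<^sub>0"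
    using assms by (auto elim!: nonpos_Ints_cases)
  then have "Gamma (z + 1) = z * Gamma z" by (rule Gamma_plus1)
  moreover have "Gamma (z + 1) > 0" using assms by simp
  ultimately show ?thesis using assms by (simp add: zero_less_mult_iff)
qed

lemma kbar_defined_pos:
  assumes "0 < \<sigma>" "real N + 2 * \<sigma> < \<alpha>" "\<alpha> < real N + 2"
  shows "kbar_defined N \<sigma> \<alpha>" and "kbar N \<sigma> \<alpha> > 0"
proof -
  have neg1: "Gamma ((real N - \<alpha>)/2) < 0" and neg2: "Gamma ((real N - \<alpha> + 2 * \<sigma>)/2) < 0"
    using assms by (auto intro!: Gamma_real_neg)
  have pos1: "Gamma ((\<alpha> - 2 * \<sigma>)/2) > 0" and pos2: "Gamma (\<alpha>/2) > 0"
    using assms by auto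
  show "kbar_defined N \<sigma> \<alpha>"
    using neg1 neg2 pos1 pos2 unfolding kbar_defined_def by (auto simp flip: Gamma_eq_zero_iff)
  show "kbar N \<sigma> \<alpha> > 0"
    using neg1 neg2 pos1 pos2 unfolding kbar_def
    by (simp add: zero_less_mult_iff zero_less_divide_iff mult_neg_pos mult_pos_neg)
qed

text \<open>The left-hand side is the flux \<open>v\<^sup>m\<^sup>-\<^sup>1 \<partial>\<^sub>i (-\<Delta>)\<^sup>-\<^sup>s v\<close> of \<open>v = c |y|\<^sup>-\<^sup>a\<close>.\<close>
lemma flux_norm_powr:
  fixes y :: "real^'n"
  assumes "c > 0" "a * (1 - m) = 2 - 2 * s"
  shows "(c * norm y powr (-a)) powr (m - 1) * (c * k * ((-a + 2 * s) * norm y powr (-a + 2 * s - 2) * y $ i))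
       = c powr m * k * (2 * s - a) * (norm y powr (-a) * y $ i)"
proof (cases "y = 0")
  case False
  have "(c * norm y powr (-a)) powr (m - 1) * norm y powr (-a + 2 * s - 2)
      = c powr (m - 1) * norm y powr (-a * (m - 1) + (-a + 2 * s - 2))"
    using assms(1) by (simp only: powr_mult powr_powr powr_add mult_ac)
  also have "-a * (m - 1) + (-a + 2 * s - 2) = -a"
    using assms(2) by (simp add: algebra_simps)
  finally have flux_power: "(c * norm y powr (-a)) powr (m - 1) * norm y powr (-a + 2 * s - 2)
      = c powr (m - 1) * norm y powr (-a)" .
  have "(c * norm y powr (-a)) powr (m - 1) * (c * k * ((-a + 2 * s) * norm y powr (-a + 2 * s - 2) * y $ i))
      = ((c * norm y powr (-a)) powr (m - 1) * norm y powr (-a + 2 * s - 2)) * c * k * (-a + 2 * s) * y $ i"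
    by (simp only: mult_ac)
  also have "\<dots> = (c powr (m - 1) * c) * k * (2 * s - a) * (norm y powr (-a) * y $ i)"
    unfolding flux_power by (simp add: algebra_simps)
  also have "c powr (m - 1) * c = c powr m"
    using assms(1) by (simp add: powr_diff)
  finally show ?thesis .
qed simp

lemma DERIV_powr_one_div_one_minus:
  assumes "m < 1" "t > 0"
  shows "((\<lambda>\<tau>. \<tau> powr (1/(1-m))) has_real_derivative (t powr (1/(1-m))) powr m / (1-m)) (at t)"
proof -
  have "(t powr (1/(1-m))) powr m = t powr (1/(1-m) - 1)"
    using assms by (simp add: powr_powr field_simps)
  with has_real_derivative_powr[OF assms(2), of "1/(1-m)"] show ?thesis
    by simp
qed

text \<open>The constant \<open>K\<close> of the separable solution: \<open>K = ((1-m) C)\<^sup>1\<^sup>/\<^sup>(\<^sup>1\<^sup>-\<^sup>m\<^sup>)\<close>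
  balances \<open>(K T)' = K\<^sup>m C T\<^sup>m\<close> for \<open>T = t\<^sup>1\<^sup>/\<^sup>(\<^sup>1\<^sup>-\<^sup>m\<^sup>)\<close>.\<close>
lemma separable_constant:
  fixes m C :: real
  assumes "m < 1" "C > 0"
  defines "K \<equiv> ((1-m)*C) powr (1/(1-m))"
  shows "K > 0" and "K / (1-m) = K powr m * C"
proof -
  have "(1-m)*C \<noteq> 0" "(1-m)*C > 0" using assms(1,2) by simp_all
  then show "K > 0" unfolding K_def by simp
  have "K / (1-m) = K powr m * K powr (1-m) / (1-m)"
    using \<open>K > 0\<close> by (simp flip: powr_add)
  also have "K powr (1-m) = (1-m)*C"
    unfolding K_def using \<open>(1-m)*C > 0\<close> assms(1) by (simp add: powr_powr)
  finally show "K / (1-m) = K powr m * C" using assms(1) by (simp add: field_simps)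
qed

lemma separable_solution_pointwise:
  fixes x :: "real^'n"
  assumes "m < 1" "a * (1 - m) = 2 - 2 * s" "K > 0"
    and K_balance: "K / (1 - m) = K powr m * (k * (2 * s - a) * (real CARD('n) - a))"
    and "x \<noteq> 0" "t > 0"
  shows "\<exists>dv G divs.
    ((\<lambda>\<tau>. K * \<tau> powr (1/(1-m)) * norm x powr (-a)) has_real_derivative dv) (at t) \<and>
    (\<forall>y i. y \<noteq> 0 \<longrightarrow>
       has_partial (\<lambda>z. K * t powr (1/(1-m)) * k * norm z powr (-a + 2 * s)) i y (G y i)) \<and>
    (\<forall>i. has_partial (\<lambda>y. (K * t powr (1/(1-m)) * norm y powr (-a)) powr (m - 1) * G y i)
           i x (divs i)) \<and>
    dv = (\<Sum>i\<in>UNIV. divs i)"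
proof -
  define T where "T = t powr (1/(1-m))"
  define c where "c = K * T"
  have "c > 0" unfolding c_def T_def using assms by simp
  define B where "B = c powr m * k * (2 * s - a)"
  define G where "G (y :: real^'n) i = c * k * ((-a + 2 * s) * norm y powr (-a + 2 * s - 2) * y $ i)" for y i
  define divs where
    "divs i = B * (-a * norm x powr (-a - 2) * (x $ i)\<^sup>2 + norm x powr (-a))" for i
  have flux: "(\<lambda>y. (c * norm y powr (-a)) powr (m - 1) * G y i) = (\<lambda>y. B * (norm y powr (-a) * y $ i))"
    for i unfolding G_def B_def by (rule ext, rule flux_norm_powr[OF \<open>c > 0\<close> assms(2)])
  have "((\<lambda>\<tau>. K * \<tau> powr (1/(1-m)) * norm x powr (-a)) has_real_derivative
      K * (T powr m / (1-m)) * norm x powr (-a)) (at t)"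
    unfolding T_def using DERIV_powr_one_div_one_minus[OF assms(1,6)]
    by (intro DERIV_cmult DERIV_cmult_right)
  moreover have "K * (T powr m / (1-m)) * norm x powr (-a) = (\<Sum>i\<in>UNIV. divs i)"
  proof -
    have "K * (T powr m / (1-m)) * norm x powr (-a) = K / (1-m) * T powr m * norm x powr (-a)"
      by simp
    also have "\<dots> = (K powr m * T powr m * k * (2 * s - a)) * (real CARD('n) - a) * norm x powr (-a)"
      unfolding K_balance by (simp only: mult_ac)
    also have "K powr m * T powr m * k * (2 * s - a) = B"
      unfolding B_def c_def using assms(3,6) by (simp add: T_def powr_mult)
    also have "B * (real CARD('n) - a) * norm x powr (-a) = (\<Sum>i\<in>UNIV. divs i)"
      unfolding divs_def sum_distrib_left[symmetric]
      using sum_partials_norm_powr_times_component[OF assms(5), of "-a"] by simp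
    finally show ?thesis .
  qed
  moreover have "has_partial (\<lambda>y. (c * norm y powr (-a)) powr (m - 1) * G y i) i x (divs i)" for i
    unfolding flux divs_def
    by (intro has_partial_cmult has_partial_norm_powr_times_component assms(5))
  moreover have "has_partial (\<lambda>z. c * k * norm z powr (-a + 2 * s)) i y (G y i)" if "y \<noteq> 0" for y i
    unfolding G_def using has_partial_cmult[OF has_partial_norm_powr[OF that]] by simp
  ultimately show ?thesis
    unfolding c_def T_def by (intro exI conjI allI impI) (auto simp: mult.assoc)
qed

lemma exponent_bounds:
  fixes N s m :: real
  assumes "0 < s" "s < 1" "0 \<le> N"
    and "(N - 2 + 4 * s) / (N + 2 * s) < m" "m < (N + 2 * s) / (N + 2)"
  shows "m < 1" and "N + 2 * s < (2 - 2 * s) / (1 - m)" and "(2 - 2 * s) / (1 - m) < N + 2"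
proof -
  have lower: "N - 2 + 4 * s < m * (N + 2 * s)" and upper: "m * (N + 2) < N + 2 * s"
    using assms by (simp_all add: divide_less_eq less_divide_eq)
  show "m < 1"
    using upper assms by (smt (verit) mult_le_cancel_right1)
  then show "N + 2 * s < (2 - 2 * s) / (1 - m)" and "(2 - 2 * s) / (1 - m) < N + 2"
    using lower upper by (simp_all add: less_divide_eq divide_less_eq algebra_simps)
qed

theorem theorem6p1:
  fixes s m :: real
  assumes "0 < s" "s < 1"
    and "(real (CARD('n)) - 2 + 4* s) / (real (CARD('n)) + 2* s) < m"
    and "m < (real (CARD('n)) + 2* s) / (real (CARD('n)) + 2)"
  shows "\<exists>K>0. \<exists>P :: real^'n \<Rightarrow> real \<Rightarrow> real.
    (\<forall>t>0. inv_frac_lap s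
        (\<lambda>y. K * t powr (1/(1-m)) * norm y powr (-(2-2* s)/(1-m))) (\<lambda>y. P y t)) \<and>
    (\<forall>x t. x \<noteq> 0 \<longrightarrow> t > 0 \<longrightarrow>
      (\<exists>dv G divs.
        ((\<lambda>\<tau>. K * \<tau> powr (1/(1-m)) * norm x powr (-(2-2* s)/(1-m))) has_real_derivative dv) (at t) \<and>
        (\<forall>y i. y \<noteq> 0 \<longrightarrow> has_partial (\<lambda>z. P z t) i y (G y i)) \<and>
        (\<forall>i. has_partial
               (\<lambda>y. (K * t powr (1/(1-m)) * norm y powr (-(2-2* s)/(1-m))) powr (m-1) * G y i)
               i x (divs i)) \<and>
        dv = (\<Sum>i\<in>UNIV. divs i)))"
proof -
  define N where "N = real CARD('n)"
  define a where "a = (2 - 2 * s) / (1 - m)"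
  have bounds: "m < 1" "N + 2 * s < a" "a < N + 2"
    using exponent_bounds[of s N m] assms unfolding N_def a_def by simp_all
  define k where "k = kbar CARD('n) s a"
  have k: "kbar_defined CARD('n) s a" "k > 0"
    using kbar_defined_pos[of s "CARD('n)" a] bounds assms(1) by (simp_all add: k_def N_def)
  have "(2 * s - a) * (N - a) > 0"
    using bounds assms(1) by (intro mult_neg_neg) (auto simp: N_def)
  with k(2) have "k * (2 * s - a) * (N - a) > 0"
    by (simp add: mult.assoc)
  from separable_constant[OF bounds(1) this] obtain K
    where K: "K > 0" "K / (1 - m) = K powr m * (k * (2 * s - a) * (N - a))" by blast
  have exponent: "-(2 - 2 * s) / (1 - m) = -a" "a * (1 - m) = 2 - 2 * s"
    using bounds(1) by (simp_all add: a_def minus_divide_left)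
  define P :: "real^'n \<Rightarrow> real \<Rightarrow> real"
    where "P y t = K * t powr (1/(1-m)) * k * norm y powr (-a + 2 * s)" for y t
  have riesz: "inv_frac_lap s (\<lambda>y. K * t powr (1/(1-m)) * norm y powr (-a)) (\<lambda>y. P y t)" for t
    unfolding inv_frac_lap_def P_def k_def
    using k(1) by (intro exI[of _ "K * t powr (1/(1-m))"] exI[of _ a]) simp
  show ?thesis
    unfolding exponent(1) using K(1) riesz
      separable_solution_pointwise[OF bounds(1) exponent(2) K(1) K(2)[unfolded N_def], folded P_def]
    by blast
qed

end
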